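(* For any $\Delta:N\setminus\{0\}\to\mathbb N$ and any $g\in\mathbb N$, the set of types $(\Gamma,u)$ of tropical curves of degree $\Delta$ and genus $g$ that are realized by at least one tropical curve (i.e. $\mathcal T_{(\Gamma,u)}\neq\emptyset$) is finite.
   Context: $N$ is a free abelian group of rank $n\ge2$, $N_\mathbb Q=N\otimes\mathbb Q$, $N_\mathbb R=N\otimes\mathbb R$. An open graph $\Gamma$ is obtained from a connected finite graph without divalent vertices by deleting its univalent vertices; vertices $\Gamma^{[0]}$, edges $\Gamma^{[1]}$, unbounded (non-compact) edges $\Gamma^{[1]}_\infty$, weights $w:\Gamma^{[1]}\to\mathbb Z_{>0}$; flags are pairs $(V,E)$ with $V$ an endpoint of $E$. A tropical curve is (an isomorphism class of) a proper map $h:\Gamma\to N_\mathbb R$ such that each $h|_E$ is an embedding into an affine line of rational slope, $h(V)\in N_\mathbb Q$, and at each vertex $\sum_{E\ni V}w(E)u_{(V,E)}=0$, where $u_{(V,E)}\in N$ is the primitive vector from $h(V)$ in the direction of $h(E)$. Its type is the weighted graph $\Gamma$ together with the map $u$ on flags; $\mathcal T_{(\Gamma,u)}$ is the set of tropical curves of that type. Genus $=b_1(\Gamma)$. Degree: $\Delta(v)=\#\{E\in\Gamma^{[1]}_\infty:w(E)u_{(V,E)}=v\}$, $V$ the vertex of $E$. *)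

theory Defs
  imports "HOL-Analysis.Analysis"
begin

text \<open>The lattice N is int ^ 'n (rank CARD('n)); N_R is real ^ 'n.
  A type of tropical curve is encoded combinatorially with vertices and edges labelled by
  natural numbers.  ends e is the set of endpoints of edge e (two for a bounded edge,
  one for an unbounded edge), wt is the weight, dir v e is the primitive vector u_(v,e)
  attached to the flag (v,e).\<close>

record ('n::finite) trop_type =
  tverts :: "nat set"
  tedges :: "nat set"
  tunb   :: "nat set"
  tends  :: "nat \<Rightarrow> nat set"
  twt    :: "nat \<Rightarrow> nat"
  tdir   :: "nat \<Rightarrow> nat \<Rightarrow> int ^ 'n"

definition primitive_vec :: "int ^ ('n::finite) \<Rightarrow> bool" where
  "primitive_vec v \<longleftrightarrow> v \<noteq> 0 \<and> (\<forall>(k::int) w. v = k *s w \<longrightarrow> \<bar>k\<bar> = 1)"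

definition bounded_edges :: "('n::finite) trop_type \<Rightarrow> nat set" where
  "bounded_edges T = tedges T - tunb T"

definition flag_count :: "('n::finite) trop_type \<Rightarrow> nat \<Rightarrow> nat" where
  "flag_count T v = card {e \<in> tedges T. v \<in> tends T e}"

text \<open>Open graph: finite, connected, nonempty vertex set, no vertex of valence 1 or 2
  (univalent vertices were removed, divalent ones are excluded), bounded edges have two
  distinct endpoints, unbounded edges have exactly one endpoint; positive weights;
  u is a primitive vector on every flag.\<close>
definition is_trop_type :: "('n::finite) trop_type \<Rightarrow> bool" where
  "is_trop_type T \<longleftrightarrow>
     finite (tverts T) \<and> finite (tedges T) \<and> tverts T \<noteq> {} \<and> tunb T \<subseteq> tedges T \<and>
     (\<forall>e\<in>tedges T. tends T e \<subseteq> tverts T) \<and>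
     (\<forall>e\<in>bounded_edges T. card (tends T e) = 2) \<and>
     (\<forall>e\<in>tunb T. card (tends T e) = 1) \<and>
     (\<forall>a\<in>tverts T. \<forall>b\<in>tverts T.
        (a, b) \<in> {(x, y). \<exists>e\<in>bounded_edges T. tends T e = {x, y}}\<^sup>*) \<and>
     (\<forall>v\<in>tverts T. flag_count T v \<noteq> 1 \<and> flag_count T v \<noteq> 2) \<and>
     (\<forall>e\<in>tedges T. twt T e > 0) \<and>
     (\<forall>e\<in>tedges T. \<forall>v\<in>tends T e. primitive_vec (tdir T v e))"

definition real_vec :: "int ^ ('n::finite) \<Rightarrow> real ^ 'n" where
  "real_vec u = (\<chi> i. real_of_int (u $ i))"

definition rat_point :: "real ^ ('n::finite) \<Rightarrow> bool" where
  "rat_point x \<longleftrightarrow> (\<forall>i. x $ i \<in> \<rat>)"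

text \<open>A tropical curve of type T: positions h v in N_Q of the vertices such that every
  bounded edge is mapped to a nondegenerate segment whose primitive directions at its two
  ends are the prescribed ones (unbounded edges are then the rays h v + R_{\<ge>0} u_(v,e)),
  and the balancing condition holds at every vertex.\<close>
definition is_trop_curve :: "('n::finite) trop_type \<Rightarrow> (nat \<Rightarrow> real ^ 'n) \<Rightarrow> bool" where
  "is_trop_curve T h \<longleftrightarrow>
     (\<forall>v\<in>tverts T. rat_point (h v)) \<and>
     (\<forall>e\<in>bounded_edges T. \<forall>a b. tends T e = {a, b} \<and> a \<noteq> b \<longrightarrow>
        (\<exists>l::real. l > 0 \<and> h b - h a = l *\<^sub>R real_vec (tdir T a e)
                          \<and> h a - h b = l *\<^sub>R real_vec (tdir T b e))) \<and>
     (\<forall>v\<in>tverts T. (\<Sum>e\<in>{e \<in> tedges T. v \<in> tends T e}. int (twt T e) *s tdir T v e) = 0)"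

definition realizable :: "('n::finite) trop_type \<Rightarrow> bool" where
  "realizable T \<longleftrightarrow> (\<exists>h. is_trop_curve T h)"

definition trop_genus :: "('n::finite) trop_type \<Rightarrow> int" where
  "trop_genus T = int (card (bounded_edges T)) - int (card (tverts T)) + 1"

definition has_degree :: "(int ^ 'n \<Rightarrow> nat) \<Rightarrow> ('n::finite) trop_type \<Rightarrow> bool" where
  "has_degree \<Delta> T \<longleftrightarrow> (\<forall>v. v \<noteq> 0 \<longrightarrow>
     \<Delta> v = card {e \<in> tunb T. \<exists>x\<in>tends T e. int (twt T e) *s tdir T x e = v})"

definition type_iso :: "('n::finite) trop_type \<Rightarrow> ('n::finite) trop_type \<Rightarrow> bool" where
  "type_iso T T' \<longleftrightarrow> (\<exists>\<sigma> \<tau>.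
     bij_betw \<sigma> (tverts T) (tverts T') \<and> bij_betw \<tau> (tedges T) (tedges T') \<and>
     \<tau> ` tunb T = tunb T' \<and>
     (\<forall>e\<in>tedges T. tends T' (\<tau> e) = \<sigma> ` tends T e \<and> twt T' (\<tau> e) = twt T e \<and>
        (\<forall>v\<in>tends T e. tdir T' (\<sigma> v) (\<tau> e) = tdir T v e)))"

end

theory Submission
  imports Defs
begin

text \<open>Up to isomorphism, a type is described by finitely many data once the numbers of its
  vertices and edges, its weights and its primitive vectors are bounded.  All vertices are at
  least trivalent, so the genus and the number of unbounded ends, which is fixed by \<open>\<Delta>\<close>,
  bound the size of the graph.  For the weights and directions, cut a realizing curve by a
  hyperplane \<open>x\<^sub>i = c\<close> meeting a bounded edge: balancing at the vertices above
  the cut shows that the \<open>i\<close>-th component of the weighted direction of that edge is at most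
  the total \<open>i\<close>-th flux of the unbounded ends, which is bounded in terms of \<open>\<Delta>\<close>.\<close>

lemma primitive_vec_nonzero: "primitive_vec v \<Longrightarrow> v \<noteq> 0"
  by (simp add: primitive_vec_def)

lemma is_trop_typeD:
  assumes "is_trop_type T"
  shows "finite (tverts T)" "finite (tedges T)" "tunb T \<subseteq> tedges T"
    and "\<And>e. e \<in> tedges T \<Longrightarrow> tends T e \<subseteq> tverts T"
  using assms by (auto simp: is_trop_type_def)

lemma trop_type_unbounded_end:
  assumes "is_trop_type T" "e \<in> tunb T"
  obtains x where "tends T e = {x}"
  using assms by (auto simp: is_trop_type_def card_1_singleton_iff)

lemma trop_type_bounded_ends:
  assumes "is_trop_type T" "e \<in> bounded_edges T"
  obtains x y where "tends T e = {x, y}" "x \<noteq> y"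
proof -
  have "card (tends T e) = 2" using assms by (simp add: is_trop_type_def)
  then show ?thesis using that by (auto simp: card_2_iff)
qed

lemma sum_tedges_split:
  assumes "is_trop_type T"
  shows "(\<Sum>e\<in>tedges T. f e) = (\<Sum>e\<in>bounded_edges T. f e) + (\<Sum>e\<in>tunb T. f e)"
proof -
  have "tedges T = bounded_edges T \<union> tunb T" "bounded_edges T \<inter> tunb T = {}"
    using is_trop_typeD(3)[OF assms] by (auto simp: bounded_edges_def)
  then show ?thesis
    using is_trop_typeD(2)[OF assms] by (metis finite_Un sum.union_disjoint)
qed

lemma trop_type_flag_nonzero:
  assumes "is_trop_type T" "e \<in> tedges T" "x \<in> tends T e"
  shows "twt T e > 0" "tdir T x e \<noteq> 0"
proof -
  show "twt T e > 0" using assms unfolding is_trop_type_def by blast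
  have "primitive_vec (tdir T x e)" using assms unfolding is_trop_type_def by blast
  then show "tdir T x e \<noteq> 0" by (rule primitive_vec_nonzero)
qed

lemma trop_type_tends_nonempty:
  assumes "is_trop_type T" "e \<in> tedges T"
  shows "tends T e \<noteq> {}"
proof -
  have "card (tends T e) \<noteq> 0"
    using assms by (cases "e \<in> tunb T") (auto simp: is_trop_type_def bounded_edges_def)
  then show ?thesis by auto
qed

lemma weighted_dir_nonzero:
  assumes "is_trop_type T" "e \<in> tedges T" "x \<in> tends T e"
  shows "int (twt T e) *s tdir T x e \<noteq> 0"
  using trop_type_flag_nonzero[OF assms] by (auto simp: vec_eq_iff)

lemma weighted_vec_bounds:
  fixes u :: "int ^ 'n::finite"
  assumes "u \<noteq> 0" "w > 0" "\<And>j. \<bar>int w * u $ j\<bar> \<le> K"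
  shows "int w \<le> K" "\<bar>u $ j\<bar> \<le> K"
proof -
  obtain j0 where "u $ j0 \<noteq> 0" using assms(1) by (auto simp: vec_eq_iff)
  then have "int w \<le> \<bar>int w * u $ j0\<bar>"
    by (simp add: abs_mult mult_le_cancel_left1 zero_less_abs_iff int_one_le_iff_zero_less)
  then show "int w \<le> K" using assms(3) order_trans by blast
  have "\<bar>u $ j\<bar> \<le> \<bar>int w * u $ j\<bar>"
    using assms(2) by (simp add: abs_mult mult_le_cancel_right1)
  then show "\<bar>u $ j\<bar> \<le> K" using assms(3) order_trans by blast
qed

definition deg_support :: "(int ^ 'n \<Rightarrow> nat) \<Rightarrow> (int ^ ('n::finite)) set" where
  "deg_support \<Delta> = {v. v \<noteq> 0 \<and> \<Delta> v > 0}"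

definition deg_total :: "(int ^ ('n::finite) \<Rightarrow> nat) \<Rightarrow> nat" where
  "deg_total \<Delta> = (\<Sum>v\<in>deg_support \<Delta>. \<Delta> v)"

lemma has_degree_unbounded_dir:
  fixes T :: "('n::finite) trop_type"
  assumes tt: "is_trop_type T" and deg: "has_degree \<Delta> T"
    and e: "e \<in> tunb T" and x: "x \<in> tends T e"
  shows "int (twt T e) *s tdir T x e \<in> deg_support \<Delta>"
proof -
  let ?v = "int (twt T e) *s tdir T x e"
  have nz: "?v \<noteq> 0"
    using weighted_dir_nonzero[OF tt _ x] is_trop_typeD(3)[OF tt] e by blast
  have "e \<in> {e' \<in> tunb T. \<exists>x'\<in>tends T e'. int (twt T e') *s tdir T x' e' = ?v}"
    using e x by blast
  moreover have "finite (tunb T)"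
    using is_trop_typeD(2,3)[OF tt] finite_subset by blast
  ultimately have "\<Delta> ?v > 0"
    using deg nz by (auto simp: has_degree_def card_gt_0_iff)
  with nz show ?thesis by (simp add: deg_support_def)
qed

lemma has_degree_finite_support:
  assumes tt: "is_trop_type T" and deg: "has_degree \<Delta> T"
  shows "finite (deg_support \<Delta>)"
proof (rule finite_subset)
  show "deg_support \<Delta> \<subseteq> (\<Union>e\<in>tunb T. (\<lambda>x. int (twt T e) *s tdir T x e) ` tends T e)"
  proof
    fix v assume "v \<in> deg_support \<Delta>"
    then have "card {e \<in> tunb T. \<exists>x\<in>tends T e. int (twt T e) *s tdir T x e = v} \<noteq> 0"
      using deg by (auto simp: deg_support_def has_degree_def)
    then have "{e \<in> tunb T. \<exists>x\<in>tends T e. int (twt T e) *s tdir T x e = v} \<noteq> {}"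
      by (metis card.empty)
    then obtain e x where "e \<in> tunb T" "x \<in> tends T e" "int (twt T e) *s tdir T x e = v"
      by blast
    then show "v \<in> (\<Union>e\<in>tunb T. (\<lambda>x. int (twt T e) *s tdir T x e) ` tends T e)"
      by blast
  qed
  show "finite (\<Union>e\<in>tunb T. (\<lambda>x. int (twt T e) *s tdir T x e) ` tends T e)"
  proof (rule finite_UN_I)
    show "finite (tunb T)" using is_trop_typeD(2,3)[OF tt] by (rule finite_subset[rotated])
    show "finite ((\<lambda>x. int (twt T e) *s tdir T x e) ` tends T e)" if "e \<in> tunb T" for e
      using trop_type_unbounded_end[OF tt that] by (metis finite.emptyI finite_imageI finite_insert)
  qed
qed

lemma has_degree_card_tunb_le:
  assumes tt: "is_trop_type T" and deg: "has_degree \<Delta> T"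
  shows "card (tunb T) \<le> deg_total \<Delta>"
proof -
  define F where "F v = {e \<in> tunb T. \<exists>x\<in>tends T e. int (twt T e) *s tdir T x e = v}" for v
  have fin: "finite (deg_support \<Delta>)" by (rule has_degree_finite_support[OF tt deg])
  have "tunb T \<subseteq> (\<Union>v\<in>deg_support \<Delta>. F v)"
  proof
    fix e assume e: "e \<in> tunb T"
    obtain x where "tends T e = {x}" using trop_type_unbounded_end[OF tt e] .
    with e show "e \<in> (\<Union>v\<in>deg_support \<Delta>. F v)"
      using has_degree_unbounded_dir[OF tt deg e] by (auto simp: F_def)
  qed
  then have "card (tunb T) \<le> card (\<Union>v\<in>deg_support \<Delta>. F v)"
    using fin is_trop_typeD(2,3)[OF tt] by (intro card_mono) (auto simp: F_def finite_subset)
  also have "\<dots> \<le> (\<Sum>v\<in>deg_support \<Delta>. card (F v))" by (rule card_UN_le[OF fin])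
  also have "\<dots> = deg_total \<Delta>"
    unfolding deg_total_def using deg
    by (intro sum.cong) (auto simp: has_degree_def deg_support_def F_def)
  finally show ?thesis .
qed

definition deg_coord_bound :: "(int ^ ('n::finite) \<Rightarrow> nat) \<Rightarrow> int" where
  "deg_coord_bound \<Delta> = (\<Sum>v\<in>deg_support \<Delta>. \<Sum>j\<in>UNIV. \<bar>v $ j\<bar>)"

lemma deg_coord_bound_nonneg: "0 \<le> deg_coord_bound \<Delta>"
  unfolding deg_coord_bound_def by (intro sum_nonneg) auto

lemma abs_component_le_deg_coord_bound:
  assumes "finite (deg_support \<Delta>)" "v \<in> deg_support \<Delta>"
  shows "\<bar>v $ j\<bar> \<le> deg_coord_bound \<Delta>"
proof -
  have "\<bar>v $ j\<bar> \<le> (\<Sum>j\<in>UNIV. \<bar>v $ j\<bar>)" by (rule member_le_sum) auto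
  also have "\<dots> \<le> deg_coord_bound \<Delta>"
    unfolding deg_coord_bound_def using assms by (intro member_le_sum) auto
  finally show ?thesis .
qed

lemma flag_count_sum:
  assumes tt: "is_trop_type T"
  shows "(\<Sum>v\<in>tverts T. flag_count T v) = 2 * card (bounded_edges T) + card (tunb T)"
proof -
  note basic = is_trop_typeD[OF tt]
  have "(\<Sum>v\<in>tverts T. flag_count T v)
      = (\<Sum>v\<in>tverts T. \<Sum>e\<in>{e\<in>tedges T. v \<in> tends T e}. (1::nat))"
    by (simp add: flag_count_def)
  also have "\<dots> = (\<Sum>e\<in>tedges T. \<Sum>v\<in>{v\<in>tverts T. v \<in> tends T e}. (1::nat))"
    by (rule sum.swap_restrict[OF basic(1,2)])
  also have "\<dots> = (\<Sum>e\<in>tedges T. card (tends T e))"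
  proof (rule sum.cong[OF refl])
    fix e assume "e \<in> tedges T"
    then have "{v\<in>tverts T. v \<in> tends T e} = tends T e" using basic(4) by blast
    then show "(\<Sum>v\<in>{v\<in>tverts T. v \<in> tends T e}. 1) = card (tends T e)" by simp
  qed
  also have "\<dots> = (\<Sum>e\<in>bounded_edges T. card (tends T e)) + (\<Sum>e\<in>tunb T. card (tends T e))"
    by (rule sum_tedges_split[OF tt])
  also have "\<dots> = (\<Sum>e\<in>bounded_edges T. 2) + (\<Sum>e\<in>tunb T. 1)"
    using tt by (intro arg_cong2[where f="(+)"] sum.cong) (auto simp: is_trop_type_def)
  finally show ?thesis by simp
qed

lemma flag_count_ge_3:
  assumes tt: "is_trop_type T" and v: "v \<in> tverts T" and w: "w \<in> tverts T" "w \<noteq> v"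
  shows "flag_count T v \<ge> 3"
proof -
  let ?R = "{(x, y). \<exists>e\<in>bounded_edges T. tends T e = {x, y}}"
  have "(v, w) \<in> ?R\<^sup>*" using tt v w by (simp add: is_trop_type_def)
  then obtain y where "(v, y) \<in> ?R"
    by (rule converse_rtranclE) (use w in auto)
  then obtain e where "e \<in> bounded_edges T" "v \<in> tends T e" by auto
  then have "e \<in> {e\<in>tedges T. v \<in> tends T e}" by (simp add: bounded_edges_def)
  then have "flag_count T v \<noteq> 0"
    using is_trop_typeD(2)[OF tt] by (auto simp: flag_count_def)
  moreover have "flag_count T v \<noteq> 1" "flag_count T v \<noteq> 2"
    using tt v by (auto simp: is_trop_type_def)
  ultimately show ?thesis by linarith
qed

lemma card_tverts_le:
  assumes tt: "is_trop_type T" and gen: "trop_genus T = int g"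
  shows "card (tverts T) \<le> 2 * g + card (tunb T) + 1"
proof (cases "card (tverts T) \<le> 1")
  case False
  have "flag_count T v \<ge> 3" if v: "v \<in> tverts T" for v
  proof -
    obtain w where "w \<in> tverts T" "w \<noteq> v"
      using False v card_le_Suc0_iff_eq[OF is_trop_typeD(1)[OF tt]] by auto
    then show ?thesis by (rule flag_count_ge_3[OF tt v])
  qed
  then have "3 * card (tverts T) \<le> (\<Sum>v\<in>tverts T. flag_count T v)"
    using sum_mono[of "tverts T" "\<lambda>_. 3::nat" "flag_count T"] by (simp add: mult.commute)
  then show ?thesis
    using flag_count_sum[OF tt] gen by (simp add: trop_genus_def)
qed simp

lemma card_tedges_le:
  assumes tt: "is_trop_type T" and gen: "trop_genus T = int g"
  shows "card (tedges T) \<le> card (tverts T) + g + card (tunb T)"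
  using sum_tedges_split[OF tt, of "\<lambda>_. 1::nat"] gen by (simp add: trop_genus_def)

lemma trop_curve_bounded_edge:
  assumes hc: "is_trop_curve T h" and e: "e \<in> bounded_edges T"
    and xy: "tends T e = {x, y}" "x \<noteq> y"
  obtains l :: real where "l > 0" "\<And>i. h y $ i - h x $ i = l * of_int (tdir T x e $ i)"
    "tdir T y e = - tdir T x e"
proof -
  obtain l :: real where l: "l > 0" "h y - h x = l *\<^sub>R real_vec (tdir T x e)"
     "h x - h y = l *\<^sub>R real_vec (tdir T y e)"
    using hc e xy unfolding is_trop_curve_def by blast
  have dx: "h y $ i - h x $ i = l * of_int (tdir T x e $ i)" for i
    using arg_cong[OF l(2), of "\<lambda>v. v $ i"] by (simp add: real_vec_def)
  have "l * of_int (tdir T y e $ i) = l * of_int (- tdir T x e $ i)" for i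
    using dx[of i] arg_cong[OF l(3), of "\<lambda>v. v $ i"] by (simp add: real_vec_def)
  then have "tdir T y e $ i = - tdir T x e $ i" for i
    using l(1) by (metis mult_cancel_left of_int_eq_iff order_less_irrefl)
  then have "tdir T y e = - tdir T x e" by (simp add: vec_eq_iff)
  with l(1) dx show ?thesis by (rule that)
qed

lemma trop_curve_opposite_dirs:
  assumes "is_trop_curve T h" "e \<in> bounded_edges T" "tends T e = {x, y}" "x \<noteq> y"
  shows "tdir T y e = - tdir T x e"
  using trop_curve_bounded_edge[OF assms] by blast

lemma trop_curve_edge_dir_signs:
  assumes "is_trop_curve T h" "e \<in> bounded_edges T" "tends T e = {x, y}" "x \<noteq> y"
  shows "0 < tdir T x e $ i \<longleftrightarrow> h x $ i < h y $ i"
    and "tdir T x e $ i < 0 \<longleftrightarrow> h y $ i < h x $ i"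
    and "tdir T x e $ i = 0 \<longleftrightarrow> h x $ i = h y $ i"
proof -
  obtain l :: real where l: "l > 0" "h y $ i - h x $ i = l * of_int (tdir T x e $ i)"
    using trop_curve_bounded_edge[OF assms] by metis
  have "0 < l * of_int (tdir T x e $ i) \<longleftrightarrow> 0 < tdir T x e $ i"
    using l(1) by (simp add: zero_less_mult_iff)
  with l(2) show "0 < tdir T x e $ i \<longleftrightarrow> h x $ i < h y $ i" by linarith
  have "l * of_int (tdir T x e $ i) < 0 \<longleftrightarrow> tdir T x e $ i < 0"
    using l(1) by (simp add: mult_less_0_iff)
  with l(2) show "tdir T x e $ i < 0 \<longleftrightarrow> h y $ i < h x $ i" by linarith
  have "l * of_int (tdir T x e $ i) = 0 \<longleftrightarrow> tdir T x e $ i = 0"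
    using l(1) by simp
  with l(2) show "tdir T x e $ i = 0 \<longleftrightarrow> h x $ i = h y $ i" by linarith
qed

definition cut_flux :: "('n::finite) trop_type \<Rightarrow> 'n \<Rightarrow> nat set \<Rightarrow> nat \<Rightarrow> int" where
  "cut_flux T i S e = (\<Sum>v\<in>{v\<in>S. v \<in> tends T e}. int (twt T e) * tdir T v e $ i)"

lemma trop_curve_sum_cut_flux:
  assumes tt: "is_trop_type T" and hc: "is_trop_curve T h" and S: "S \<subseteq> tverts T"
  shows "(\<Sum>e\<in>tedges T. cut_flux T i S e) = 0"
proof -
  have "finite S" using S is_trop_typeD(1)[OF tt] by (rule finite_subset)
  have balanced: "(\<Sum>e\<in>{e\<in>tedges T. v \<in> tends T e}. int (twt T e) * tdir T v e $ i) = 0"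
    if "v \<in> S" for v
  proof -
    have "v \<in> tverts T" using that S by blast
    then have "(\<Sum>e\<in>{e \<in> tedges T. v \<in> tends T e}. int (twt T e) *s tdir T v e) = 0"
      using hc by (simp add: is_trop_curve_def)
    then have "(\<Sum>e\<in>{e \<in> tedges T. v \<in> tends T e}. int (twt T e) *s tdir T v e) $ i = 0"
      by simp
    then show ?thesis by (simp add: sum_component)
  qed
  have "(\<Sum>e\<in>tedges T. cut_flux T i S e)
      = (\<Sum>v\<in>S. \<Sum>e\<in>{e\<in>tedges T. v \<in> tends T e}. int (twt T e) * tdir T v e $ i)"
    unfolding cut_flux_def using \<open>finite S\<close> is_trop_typeD(2)[OF tt]
    by (rule sum.swap_restrict[symmetric])
  also have "\<dots> = 0" using balanced by simp
  finally show ?thesis .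
qed

lemma trop_curve_cut_flux_upper_nonpos:
  assumes tt: "is_trop_type T" and hc: "is_trop_curve T h" and e: "e \<in> bounded_edges T"
  shows "cut_flux T i {v \<in> tverts T. t < h v $ i} e \<le> 0"
proof -
  let ?S = "{v \<in> tverts T. t < h v $ i}"
  obtain x y where xy: "tends T e = {x, y}" "x \<noteq> y"
    using trop_type_bounded_ends[OF tt e] .
  have yx: "tends T e = {y, x}" using xy by auto
  have "x \<in> tverts T" "y \<in> tverts T"
    using is_trop_typeD(4)[OF tt] e xy by (auto simp: bounded_edges_def)
  have leaving: "int (twt T e) * tdir T a e $ i \<le> 0"
    if "tends T e = {a, b}" "a \<noteq> b" "a \<in> ?S" "b \<in> tverts T" "b \<notin> ?S" for a b
  proof -
    have "tdir T a e $ i < 0"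
      using that trop_curve_edge_dir_signs(2)[OF hc e that(1,2)] by auto
    then show ?thesis by (simp add: mult_nonneg_nonpos)
  qed
  consider "x \<in> ?S" "y \<in> ?S" | "x \<in> ?S" "y \<notin> ?S" | "x \<notin> ?S" "y \<in> ?S" | "x \<notin> ?S" "y \<notin> ?S"
    by blast
  then show ?thesis
  proof cases
    case 1
    then have "{v\<in>?S. v \<in> tends T e} = {x, y}" using xy by auto
    then show ?thesis using xy trop_curve_opposite_dirs[OF hc e xy] by (simp add: cut_flux_def)
  next
    case 2
    then have "{v\<in>?S. v \<in> tends T e} = {x}" using xy by auto
    then show ?thesis
      using leaving[OF xy 2(1) \<open>y \<in> tverts T\<close> 2(2)] by (simp add: cut_flux_def)
  next
    case 3
    then have "{v\<in>?S. v \<in> tends T e} = {y}" using xy by auto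
    then show ?thesis
      using leaving[OF yx xy(2)[symmetric] 3(2) \<open>x \<in> tverts T\<close> 3(1)] by (simp add: cut_flux_def)
  next
    case 4
    then have "{v\<in>?S. v \<in> tends T e} = {}" using xy by auto
    then show ?thesis unfolding cut_flux_def by (metis sum.empty order_refl)
  qed
qed

text \<open>Cut the curve by the hyperplane \<open>x\<^sub>i = h q $ i\<close>: the bounded edges leaving the
  upper part all point downwards, so only the unbounded ends can balance one of them.\<close>
lemma trop_curve_cut_flux_bound:
  fixes T :: "('n::finite) trop_type"
  assumes tt: "is_trop_type T" and hc: "is_trop_curve T h"
    and e0: "e0 \<in> bounded_edges T" "tends T e0 = {q, p}" "q \<noteq> p"
    and lt: "h q $ i < h p $ i"
  shows "\<bar>int (twt T e0) * tdir T p e0 $ i\<bar>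
           \<le> (\<Sum>e\<in>tunb T. \<Sum>x\<in>tends T e. \<bar>int (twt T e) * tdir T x e $ i\<bar>)"
proof -
  define S where "S = {v \<in> tverts T. h q $ i < h v $ i}"
  let ?G = "cut_flux T i S"
  note basic = is_trop_typeD[OF tt]
  have "?G e \<le> 0" if "e \<in> bounded_edges T" for e
    unfolding S_def using trop_curve_cut_flux_upper_nonpos[OF tt hc that] .
  moreover have "finite (bounded_edges T)" using basic(2) by (simp add: bounded_edges_def)
  ultimately have "(\<Sum>e\<in>bounded_edges T. ?G e) \<le> ?G e0"
    using e0(1) sum_nonpos[of "bounded_edges T - {e0}" ?G] by (simp add: sum.remove)
  moreover have "?G e0 = int (twt T e0) * tdir T p e0 $ i"
  proof -
    have "p \<in> tverts T" using basic(4) e0 by (auto simp: bounded_edges_def)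
    then have "{v\<in>S. v \<in> tends T e0} = {p}" using e0(2,3) lt by (auto simp: S_def)
    then show ?thesis by (simp add: cut_flux_def)
  qed
  moreover have "int (twt T e0) * tdir T p e0 $ i \<le> 0"
  proof -
    have "tdir T p e0 $ i < 0"
      using trop_curve_edge_dir_signs(2)[OF hc e0(1) _ e0(3)[symmetric]] e0(2) lt
      by (simp add: insert_commute)
    then show ?thesis by (simp add: mult_nonneg_nonpos)
  qed
  moreover have "(\<Sum>e\<in>tunb T. ?G e)
      \<le> (\<Sum>e\<in>tunb T. \<Sum>x\<in>tends T e. \<bar>int (twt T e) * tdir T x e $ i\<bar>)"
  proof (rule sum_mono)
    fix e assume "e \<in> tunb T"
    then obtain x where x: "tends T e = {x}" using trop_type_unbounded_end[OF tt] by blast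
    have "?G e \<le> (\<Sum>v\<in>{v\<in>S. v \<in> tends T e}. \<bar>int (twt T e) * tdir T v e $ i\<bar>)"
      unfolding cut_flux_def by (rule sum_mono) simp
    also have "\<dots> \<le> (\<Sum>x\<in>tends T e. \<bar>int (twt T e) * tdir T x e $ i\<bar>)"
      by (rule sum_mono2) (use x in auto)
    finally show "?G e \<le> (\<Sum>x\<in>tends T e. \<bar>int (twt T e) * tdir T x e $ i\<bar>)" .
  qed
  moreover have "(\<Sum>e\<in>bounded_edges T. ?G e) + (\<Sum>e\<in>tunb T. ?G e) = 0"
    using trop_curve_sum_cut_flux[OF tt hc, of S i] sum_tedges_split[OF tt, of ?G]
    by (simp add: S_def)
  ultimately show ?thesis by linarith
qed

lemma trop_curve_bounded_edge_weighted_dir_bound: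
  fixes T :: "('n::finite) trop_type"
  assumes tt: "is_trop_type T" and hc: "is_trop_curve T h"
    and e: "e \<in> bounded_edges T" and x: "x \<in> tends T e"
  shows "\<bar>int (twt T e) * tdir T x e $ i\<bar>
           \<le> (\<Sum>e\<in>tunb T. \<Sum>x\<in>tends T e. \<bar>int (twt T e) * tdir T x e $ i\<bar>)"
    (is "\<bar>?c x\<bar> \<le> ?R")
proof -
  have both: "\<bar>?c a\<bar> \<le> ?R \<and> \<bar>?c b\<bar> \<le> ?R"
    if ab: "tends T e = {a, b}" "a \<noteq> b" and le: "h a $ i \<le> h b $ i" for a b
  proof -
    have opp: "?c a = - ?c b" using trop_curve_opposite_dirs[OF hc e ab] by simp
    show ?thesis
    proof (cases "h a $ i = h b $ i")
      case True
      then have ca: "?c a = 0" using trop_curve_edge_dir_signs(3)[OF hc e ab] by simp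
      then have cb: "?c b = 0" using opp by linarith
      have "?R \<ge> 0" by (intro sum_nonneg) auto
      then show ?thesis unfolding ca cb by simp
    next
      case False
      then have "\<bar>?c b\<bar> \<le> ?R" using trop_curve_cut_flux_bound[OF tt hc e ab] le by simp
      then show ?thesis using opp by simp
    qed
  qed
  obtain a b where ab: "tends T e = {a, b}" "a \<noteq> b" using trop_type_bounded_ends[OF tt e] .
  have "\<bar>?c a\<bar> \<le> ?R \<and> \<bar>?c b\<bar> \<le> ?R"
  proof (cases "h a $ i \<le> h b $ i")
    case True then show ?thesis using both[OF ab] by blast
  next
    case False
    moreover have "tends T e = {b, a}" using ab by auto
    ultimately show ?thesis using both[of b a] ab(2) by auto
  qed
  then show ?thesis using x ab by auto
qed

lemma trop_curve_weighted_dir_bound: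
  fixes T :: "('n::finite) trop_type"
  assumes tt: "is_trop_type T" and hc: "is_trop_curve T h"
    and unb: "\<And>e x. e \<in> tunb T \<Longrightarrow> x \<in> tends T e \<Longrightarrow> \<bar>int (twt T e) * tdir T x e $ i\<bar> \<le> C"
    and e: "e \<in> tedges T" and x: "x \<in> tends T e"
  shows "\<bar>int (twt T e) * tdir T x e $ i\<bar> \<le> int (card (tunb T)) * C"
proof (cases "e \<in> tunb T")
  case True
  then have "card (tunb T) \<noteq> 0"
    using is_trop_typeD(2,3)[OF tt] by (auto simp: finite_subset)
  moreover have "\<bar>int (twt T e) * tdir T x e $ i\<bar> \<le> C" by (rule unb[OF True x])
  moreover have "C \<le> int (card (tunb T)) * C"
    using calculation by (simp add: mult_le_cancel_right1)
  ultimately show ?thesis by linarith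
next
  case False
  then have "e \<in> bounded_edges T" using e by (simp add: bounded_edges_def)
  then have "\<bar>int (twt T e) * tdir T x e $ i\<bar>
      \<le> (\<Sum>e\<in>tunb T. \<Sum>x\<in>tends T e. \<bar>int (twt T e) * tdir T x e $ i\<bar>)"
    by (rule trop_curve_bounded_edge_weighted_dir_bound[OF tt hc _ x])
  also have "\<dots> \<le> int (card (tunb T)) * C"
  proof (rule sum_bounded_above)
    fix e assume e: "e \<in> tunb T"
    then obtain x where "tends T e = {x}" using trop_type_unbounded_end[OF tt] by blast
    then show "(\<Sum>x\<in>tends T e. \<bar>int (twt T e) * tdir T x e $ i\<bar>) \<le> C" using unb[OF e] by simp
  qed
  finally show ?thesis .
qed

definition types_within :: "nat \<Rightarrow> nat \<Rightarrow> (int ^ ('n::finite)) set \<Rightarrow> 'n trop_type set" where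
  "types_within M W B = {T. tverts T \<subseteq> {..<M} \<and> tedges T \<subseteq> {..<M} \<and> tunb T \<subseteq> {..<M} \<and>
     tends T \<in> {..<M} \<rightarrow>\<^sub>E Pow {..<M} \<and> twt T \<in> {..<M} \<rightarrow>\<^sub>E {..W} \<and>
     tdir T \<in> {..<M} \<rightarrow>\<^sub>E ({..<M} \<rightarrow>\<^sub>E B)}"

lemma finite_types_within:
  assumes "finite B"
  shows "finite (types_within M W B)"
proof (rule finite_subset)
  let ?mk = "\<lambda>(a, b, c, d, e, f). \<lparr>tverts = a, tedges = b, tunb = c, tends = d, twt = e, tdir = f\<rparr>"
  let ?A = "Pow {..<M} \<times> Pow {..<M} \<times> Pow {..<M} \<times> ({..<M} \<rightarrow>\<^sub>E Pow {..<M}) \<times>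
             ({..<M} \<rightarrow>\<^sub>E {..W}) \<times> ({..<M} \<rightarrow>\<^sub>E ({..<M} \<rightarrow>\<^sub>E B))"
  show "types_within M W B \<subseteq> ?mk ` ?A"
  proof
    fix T :: "'a trop_type" assume "T \<in> types_within M W B"
    then have "(tverts T, tedges T, tunb T, tends T, twt T, tdir T) \<in> ?A"
      by (simp add: types_within_def)
    moreover have "T = ?mk (tverts T, tedges T, tunb T, tends T, twt T, tdir T)" by simp
    ultimately show "T \<in> ?mk ` ?A" by blast
  qed
  show "finite (?mk ` ?A)"
    using assms by (intro finite_imageI finite_cartesian_product finite_PiE) auto
qed

lemma finite_int_vec_box: "finite {u :: int ^ ('n::finite). \<forall>j. \<bar>u $ j\<bar> \<le> K}"
proof (rule finite_subset)
  show "{u :: int ^ 'n. \<forall>j. \<bar>u $ j\<bar> \<le> K} \<subseteq> vec_lambda ` (UNIV \<rightarrow>\<^sub>E {-K..K})"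
  proof
    fix u :: "int ^ 'n" assume "u \<in> {u. \<forall>j. \<bar>u $ j\<bar> \<le> K}"
    then have "vec_nth u \<in> UNIV \<rightarrow>\<^sub>E {-K..K}" by (simp add: abs_le_iff minus_le_iff PiE_iff)
    then show "u \<in> vec_lambda ` (UNIV \<rightarrow>\<^sub>E {-K..K})" by (metis image_eqI vec_nth_inverse)
  qed
  show "finite (vec_lambda ` (UNIV \<rightarrow>\<^sub>E {-K..K}))" by (intro finite_imageI finite_PiE) auto
qed

text \<open>Outside \<open>{..<M}\<close> and off the flags the data are padded with fixed values, so that the
  relabelled types lie in the finite set \<open>types_within M W B\<close>.\<close>
definition relabel_type ::
  "nat \<Rightarrow> (nat \<Rightarrow> nat) \<Rightarrow> (nat \<Rightarrow> nat) \<Rightarrow> ('n::finite) trop_type \<Rightarrow> 'n trop_type" where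
  "relabel_type M \<sigma> \<tau> T =
    \<lparr>tverts = \<sigma> ` tverts T, tedges = \<tau> ` tedges T, tunb = \<tau> ` tunb T,
     tends = restrict (\<lambda>e'. if e' \<in> \<tau> ` tedges T
       then \<sigma> ` tends T (inv_into (tedges T) \<tau> e') else {}) {..<M},
     twt = restrict (\<lambda>e'. if e' \<in> \<tau> ` tedges T
       then twt T (inv_into (tedges T) \<tau> e') else 0) {..<M},
     tdir = restrict (\<lambda>v'. restrict (\<lambda>e'.
       if e' \<in> \<tau> ` tedges T \<and> v' \<in> \<sigma> ` tends T (inv_into (tedges T) \<tau> e')
       then tdir T (inv_into (tverts T) \<sigma> v') (inv_into (tedges T) \<tau> e') else 0) {..<M}) {..<M}\<rparr>"

lemma type_iso_relabel_type:
  assumes tt: "is_trop_type T"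
    and \<sigma>: "inj_on \<sigma> (tverts T)" "\<sigma> ` tverts T \<subseteq> {..<M}"
    and \<tau>: "inj_on \<tau> (tedges T)" "\<tau> ` tedges T \<subseteq> {..<M}"
  shows "type_iso T (relabel_type M \<sigma> \<tau> T)"
  unfolding type_iso_def
proof (intro exI conjI ballI)
  let ?T' = "relabel_type M \<sigma> \<tau> T"
  show "bij_betw \<sigma> (tverts T) (tverts ?T')" "bij_betw \<tau> (tedges T) (tedges ?T')"
    using \<sigma>(1) \<tau>(1) by (simp_all add: relabel_type_def bij_betw_imageI)
  show "\<tau> ` tunb T = tunb ?T'" by (simp add: relabel_type_def)
  fix e assume e: "e \<in> tedges T"
  then have "\<tau> e < M" using \<tau>(2) by auto
  then show "tends ?T' (\<tau> e) = \<sigma> ` tends T e" "twt ?T' (\<tau> e) = twt T e"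
    using e \<tau>(1) by (simp_all add: relabel_type_def)
  fix v assume v: "v \<in> tends T e"
  then have "v \<in> tverts T" using is_trop_typeD(4)[OF tt e] by blast
  then show "tdir ?T' (\<sigma> v) (\<tau> e) = tdir T v e"
    using \<open>\<tau> e < M\<close> \<sigma> \<tau>(1) e v by (auto simp: relabel_type_def)
qed

lemma relabel_type_within:
  assumes tt: "is_trop_type T"
    and \<sigma>: "inj_on \<sigma> (tverts T)" "\<sigma> ` tverts T \<subseteq> {..<M}"
    and \<tau>: "\<tau> ` tedges T \<subseteq> {..<M}"
    and wt: "\<And>e. e \<in> tedges T \<Longrightarrow> twt T e \<le> W"
    and dir: "\<And>e v. e \<in> tedges T \<Longrightarrow> v \<in> tends T e \<Longrightarrow> tdir T v e \<in> B"
    and "0 \<in> B"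
  shows "relabel_type M \<sigma> \<tau> T \<in> types_within M W B"
proof -
  note basic = is_trop_typeD[OF tt]
  let ?ie = "inv_into (tedges T) \<tau>" and ?iv = "inv_into (tverts T) \<sigma>"
  have ie: "?ie e' \<in> tedges T" if "e' \<in> \<tau> ` tedges T" for e'
    using that by (rule inv_into_into)
  have iv: "?iv v' \<in> tends T e" if "e \<in> tedges T" "v' \<in> \<sigma> ` tends T e" for e v'
    using that basic(4) \<sigma>(1) by (auto simp: inv_into_f_f subset_iff)
  have "(if e' \<in> \<tau> ` tedges T then \<sigma> ` tends T (?ie e') else {}) \<in> Pow {..<M}" for e'
  proof (cases "e' \<in> \<tau> ` tedges T")
    case True
    then have "\<sigma> ` tends T (?ie e') \<subseteq> \<sigma> ` tverts T" using ie basic(4) by (intro image_mono) blast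
    with True \<sigma>(2) show ?thesis by simp
  qed simp
  moreover have "(if e' \<in> \<tau> ` tedges T then twt T (?ie e') else 0) \<in> {..W}" for e'
    using ie wt by auto
  moreover have "(if e' \<in> \<tau> ` tedges T \<and> v' \<in> \<sigma> ` tends T (?ie e')
      then tdir T (?iv v') (?ie e') else 0) \<in> B" for e' v'
    using ie iv dir \<open>0 \<in> B\<close> by auto
  moreover have "\<tau> ` tunb T \<subseteq> {..<M}" using basic(3) \<tau> by auto
  ultimately show ?thesis
    using \<sigma>(2) \<tau> by (simp add: types_within_def relabel_type_def restrict_PiE_iff)
qed

lemma trop_type_iso_within:
  assumes tt: "is_trop_type T"
    and cV: "card (tverts T) \<le> M" and cE: "card (tedges T) \<le> M"
    and wt: "\<And>e. e \<in> tedges T \<Longrightarrow> twt T e \<le> W"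
    and dir: "\<And>e v. e \<in> tedges T \<Longrightarrow> v \<in> tends T e \<Longrightarrow> tdir T v e \<in> B"
    and "0 \<in> B"
  shows "\<exists>T'\<in>types_within M W B. type_iso T T'"
proof -
  obtain \<sigma> where \<sigma>: "bij_betw \<sigma> (tverts T) {0..<card (tverts T)}"
    using ex_bij_betw_finite_nat[OF is_trop_typeD(1)[OF tt]] ..
  obtain \<tau> where \<tau>: "bij_betw \<tau> (tedges T) {0..<card (tedges T)}"
    using ex_bij_betw_finite_nat[OF is_trop_typeD(2)[OF tt]] ..
  have inj: "inj_on \<sigma> (tverts T)" "inj_on \<tau> (tedges T)"
    using \<sigma> \<tau> by (simp_all add: bij_betw_imp_inj_on)
  have range: "\<sigma> ` tverts T \<subseteq> {..<M}" "\<tau> ` tedges T \<subseteq> {..<M}"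
    using \<sigma> \<tau> cV cE by (auto simp: bij_betw_def)
  show ?thesis
    using type_iso_relabel_type[OF tt inj(1) range(1) inj(2) range(2)]
      relabel_type_within[OF tt inj(1) range wt dir \<open>0 \<in> B\<close>] by blast
qed

lemma realizable_weighted_dir_bound:
  fixes T :: "('n::finite) trop_type"
  assumes tt: "is_trop_type T" and re: "realizable T" and deg: "has_degree \<Delta> T"
    and e: "e \<in> tedges T" and x: "x \<in> tends T e"
  shows "\<bar>int (twt T e) * tdir T x e $ j\<bar> \<le> int (deg_total \<Delta>) * deg_coord_bound \<Delta>"
proof -
  obtain h where hc: "is_trop_curve T h" using re by (auto simp: realizable_def)
  have "\<bar>int (twt T e') * tdir T x' e' $ j\<bar> \<le> deg_coord_bound \<Delta>"
    if "e' \<in> tunb T" "x' \<in> tends T e'" for e' x'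
    using abs_component_le_deg_coord_bound[OF has_degree_finite_support[OF tt deg]
        has_degree_unbounded_dir[OF tt deg that], of j]
    by simp
  then have "\<bar>int (twt T e) * tdir T x e $ j\<bar> \<le> int (card (tunb T)) * deg_coord_bound \<Delta>"
    by (rule trop_curve_weighted_dir_bound[OF tt hc _ e x])
  also have "\<dots> \<le> int (deg_total \<Delta>) * deg_coord_bound \<Delta>"
    using has_degree_card_tunb_le[OF tt deg] deg_coord_bound_nonneg
    by (intro mult_right_mono) simp_all
  finally show ?thesis .
qed

lemma realizable_weight_dir_bounds:
  fixes T :: "('n::finite) trop_type"
  assumes tt: "is_trop_type T" and re: "realizable T" and deg: "has_degree \<Delta> T"
    and e: "e \<in> tedges T"
  shows "int (twt T e) \<le> int (deg_total \<Delta>) * deg_coord_bound \<Delta>"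
    and "\<And>x. x \<in> tends T e \<Longrightarrow> \<bar>tdir T x e $ j\<bar> \<le> int (deg_total \<Delta>) * deg_coord_bound \<Delta>"
proof -
  note bound = realizable_weighted_dir_bound[OF tt re deg e]
  obtain x where x: "x \<in> tends T e" using trop_type_tends_nonempty[OF tt e] by blast
  show "int (twt T e) \<le> int (deg_total \<Delta>) * deg_coord_bound \<Delta>"
    using weighted_vec_bounds(1)[OF trop_type_flag_nonzero(2,1)[OF tt e x] bound[OF x]] .
  show "\<bar>tdir T x' e $ j\<bar> \<le> int (deg_total \<Delta>) * deg_coord_bound \<Delta>" if "x' \<in> tends T e" for x'
    using weighted_vec_bounds(2)[OF trop_type_flag_nonzero(2,1)[OF tt e that] bound[OF that]] .
qed

theorem proposition2p1:
  fixes \<Delta> :: "int ^ 'n \<Rightarrow> nat" and g :: nat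
  assumes "CARD('n) \<ge> 2"
  shows "\<exists>S :: 'n trop_type set. finite S \<and>
           (\<forall>T. is_trop_type T \<and> realizable T \<and> has_degree \<Delta> T \<and> trop_genus T = int g
                \<longrightarrow> (\<exists>T'\<in>S. type_iso T T'))"
proof -
  define K where "K = int (deg_total \<Delta>) * deg_coord_bound \<Delta>"
  define M where "M = 3 * g + 2 * deg_total \<Delta> + 1"
  define B where "B = {u :: int ^ 'n. \<forall>j. \<bar>u $ j\<bar> \<le> K}"
  have "\<exists>T'\<in>types_within M (nat K) B. type_iso T T'"
    if tt: "is_trop_type T" and re: "realizable T" and deg: "has_degree \<Delta> T"
      and gen: "trop_genus T = int g" for T :: "'n trop_type"
  proof (rule trop_type_iso_within[OF tt])
    show "card (tverts T) \<le> M" "card (tedges T) \<le> M"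
      using has_degree_card_tunb_le[OF tt deg] card_tverts_le[OF tt gen] card_tedges_le[OF tt gen]
      by (simp_all add: M_def)
    show "twt T e \<le> nat K" if "e \<in> tedges T" for e
      using realizable_weight_dir_bounds(1)[OF tt re deg that] by (simp add: K_def)
    show "tdir T x e \<in> B" if "e \<in> tedges T" "x \<in> tends T e" for e x
      using realizable_weight_dir_bounds(2)[OF tt re deg that] by (simp add: B_def K_def)
    show "0 \<in> B" using deg_coord_bound_nonneg[of \<Delta>] by (simp add: B_def K_def)
  qed
  then show ?thesis using finite_types_within[OF finite_int_vec_box] unfolding B_def by blast
qed

end
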